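(* Let $\boldsymbol\theta$ be a minimizer of the loss $\mathcal{L}$ at which $\mathcal{L}$ is twice differentiable, with network function $f=f_{\boldsymbol\theta}\in\mathcal{F}_k$ satisfying $f(\boldsymbol x_j)=y_j$ for all $j$. Then $$\lambda_{\max}\big(\nabla^2_{\boldsymbol\theta}\mathcal{L}(\boldsymbol\theta)\big)\ge 1+2\|f\|_{\mathcal{R},g}.$$
   Context: Training set $\{(\boldsymbol x_j,y_j)\}_{j=1}^n\subset\mathbb{R}^d\times\mathbb{R}$. $\sigma(t)=\max(t,0)$; $f_{\boldsymbol\theta}(\boldsymbol x)=\sum_{i=1}^k w^{(2)}_i\sigma(\boldsymbol x^\top\boldsymbol w^{(1)}_i+b^{(1)}_i)+b^{(2)}$ with $\boldsymbol\theta=(\boldsymbol w^{(1)}_1,\dots,\boldsymbol w^{(1)}_k,\boldsymbol b^{(1)},\boldsymbol w^{(2)},b^{(2)})\in\mathbb{R}^{(d+2)k+1}$, and $\mathcal{F}_k$ is the set of all such functions. Loss $\mathcal{L}(\boldsymbol\theta)=\frac1{2n}\sum_j(f_{\boldsymbol\theta}(\boldsymbol x_j)-y_j)^2$. $\boldsymbol X$ is drawn uniformly from $\{\boldsymbol x_j\}$; $\tilde g(\boldsymbol v,b)=\mathbb{P}^2(\boldsymbol X^\top\boldsymbol v>b)\,\mathbb{E}[\boldsymbol X^\top\boldsymbol v-b\mid\boldsymbol X^\top\boldsymbol v>b]\sqrt{\|\mathbb{E}[\boldsymbol X\mid\boldsymbol X^\top\boldsymbol v>b]\|^2+1}$ (taken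 $0$ when the event has probability zero), $g(\boldsymbol v,b)=\min(\tilde g(\boldsymbol v,b),\tilde g(-\boldsymbol v,-b))$. Writing $f(\boldsymbol x)=\sum_i a_i\sigma(\boldsymbol v_i^\top\boldsymbol x-b_i)+\boldsymbol q^\top\boldsymbol x+c$ with $\|\boldsymbol v_i\|=1$, the distribution $(\mathcal{R}^* )^{-1}\Delta f$ ($\mathcal{R}$ the Radon transform on $\mathbb{S}^{d-1}\times\mathbb{R}$, $\Delta$ the distributional Laplacian) equals the measure $\sum_i a_i\delta_{(\boldsymbol v_i,b_i)}$, and $\|f\|_{\mathcal{R},g}=\int_{\mathbb{S}^{d-1}\times\mathbb{R}}|(\mathcal{R}^* )^{-1}\Delta f|\,g$ is the integral of $g$ against its total variation measure. *)

theory Defs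
  imports "HOL-Analysis.Analysis"
begin

definition relu :: "real \<Rightarrow> real" where
  "relu t = max t 0"

text \<open>Parameter vector theta = (w1, b1, w2, b2): w1 $ i is the first-layer weight vector of
  neuron i (in R^d), b1 $ i its bias, w2 $ i its output weight, b2 the output bias.\<close>
type_synonym ('d, 'k) params = "((real^'d)^'k) \<times> (real^'k) \<times> (real^'k) \<times> real"

definition net :: "('d::finite, 'k::finite) params \<Rightarrow> real^'d \<Rightarrow> real" where
  "net \<theta> z = (case \<theta> of (w1, b1, w2, b2) \<Rightarrow>
      (\<Sum>i\<in>UNIV. (w2 $ i) * relu (inner z (w1 $ i) + (b1 $ i))) + b2)"

definition loss :: "nat \<Rightarrow> (nat \<Rightarrow> real^'d) \<Rightarrow> (nat \<Rightarrow> real)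
                    \<Rightarrow> ('d::finite, 'k::finite) params \<Rightarrow> real" where
  "loss n x y \<theta> = (1 / (2 * real n)) * (\<Sum>j<n. (net \<theta> (x j) - y j)^2)"

definition grad :: "('a::euclidean_space \<Rightarrow> real) \<Rightarrow> 'a \<Rightarrow> 'a" where
  "grad F z = (\<Sum>e\<in>Basis. frechet_derivative F (at z) e *\<^sub>R e)"

definition twice_diff_hessian :: "('a::euclidean_space \<Rightarrow> real) \<Rightarrow> 'a \<Rightarrow> ('a \<Rightarrow> 'a) \<Rightarrow> bool" where
  "twice_diff_hessian F z H \<longleftrightarrow>
     (\<exists>S. open S \<and> z \<in> S \<and> (\<forall>w\<in>S. F differentiable (at w))) \<and>
     (grad F has_derivative H) (at z)"

definition lambda_max :: "('a::euclidean_space \<Rightarrow> 'a) \<Rightarrow> real" where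
  "lambda_max H = Max {l. \<exists>u. u \<noteq> 0 \<and> H u = l *\<^sub>R u}"

text \<open>X uniform on the empirical sample (indices j < n).  Set of indices with x_j . v > b.\<close>
definition active :: "nat \<Rightarrow> (nat \<Rightarrow> real^'d) \<Rightarrow> real^'d \<Rightarrow> real \<Rightarrow> nat set" where
  "active n x v b = {j. j < n \<and> x j \<bullet> v > b}"

text \<open>g tilde (v,b) = P(X.v>b)^2 * E[X.v - b | X.v>b] * sqrt(|E[X | X.v>b]|^2 + 1),
  taken to be 0 when the event has probability zero.\<close>
definition g_tilde :: "nat \<Rightarrow> (nat \<Rightarrow> real^'d) \<Rightarrow> real^'d \<Rightarrow> real \<Rightarrow> real" where
  "g_tilde n x v b =
     (let J = active n x v b in
      if J = {} then 0 else
        (real (card J) / real n)^2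
        * ((\<Sum>j\<in>J. x j \<bullet> v - b) / real (card J))
        * sqrt ((norm ((1 / real (card J)) *\<^sub>R (\<Sum>j\<in>J. x j)))^2 + 1))"

definition g_fun :: "nat \<Rightarrow> (nat \<Rightarrow> real^'d) \<Rightarrow> real^'d \<Rightarrow> real \<Rightarrow> real" where
  "g_fun n x v b = min (g_tilde n x v b) (g_tilde n x (- v) (- b))"

text \<open>For a representation f(x) = sum_{i<m} a_i relu(v_i.x - b_i) + q.x + c with |v_i| = 1,
  the measure (R^* )^{-1} Delta f on S^{d-1} x R, as an even finitely supported measure:
  the atom of neuron i is split evenly between (v_i,b_i) and (-v_i,-b_i) (the two
  parametrisations of the same hyperplane).\<close>
definition radon_atoms :: "nat \<Rightarrow> (nat \<Rightarrow> real) \<Rightarrow> (nat \<Rightarrow> real^'d) \<Rightarrow> (nat \<Rightarrow> real)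
                          \<Rightarrow> (real^'d) \<times> real \<Rightarrow> real" where
  "radon_atoms m a v b p =
     (\<Sum>i\<in>{i. i < m \<and> ((v i, b i) = p \<or> (v i, b i) = (- fst p, - snd p))}. a i) / 2"

definition radon_support :: "nat \<Rightarrow> (nat \<Rightarrow> real^'d) \<Rightarrow> (nat \<Rightarrow> real) \<Rightarrow> ((real^'d) \<times> real) set" where
  "radon_support m v b = (\<lambda>i. (v i, b i)) ` {..<m} \<union> (\<lambda>i. (- v i, - b i)) ` {..<m}"

definition radon_norm :: "(real^'d \<Rightarrow> real \<Rightarrow> real) \<Rightarrow> nat \<Rightarrow> (nat \<Rightarrow> real)
                          \<Rightarrow> (nat \<Rightarrow> real^'d) \<Rightarrow> (nat \<Rightarrow> real) \<Rightarrow> real" where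
  "radon_norm w m a v b = (\<Sum>p\<in>radon_support m v b. \<bar>radon_atoms m a v b p\<bar> * w (fst p) (snd p))"

end

theory Submission
  imports Defs
begin

text \<open>At an interpolating minimum the Hessian of the loss is the Gauss-Newton form
  \<open>H h \<bullet> h = (1/n) \<Sum>\<^sub>j (D\<^sub>h f(x\<^sub>j))\<^sup>2\<close>, where \<open>D\<^sub>h f(x\<^sub>j)\<close> is the one-sided derivative of
  \<open>\<theta> \<mapsto> f\<^sub>\<theta>(x\<^sub>j)\<close> in direction \<open>h\<close>. Comparing the directions that move the bias of neuron \<open>i\<close>
  by \<open>+1\<close> and by \<open>-1\<close> shows that no sample lies on the kink of a neuron with nonzero output weight,
  so \<open>D\<^sub>h f(x\<^sub>j)\<close> is the inner product of \<open>h\<close> with the parameter gradient \<open>\<nabla>f(x\<^sub>j)\<close>. Testing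
  \<open>H\<close> on the mean gradient \<open>h = (1/n) \<Sum>\<^sub>j \<nabla>f(x\<^sub>j)\<close> and applying Cauchy-Schwarz gives
  \<open>lambda_max H \<ge> \<parallel>h\<parallel>\<^sup>2\<close>.

  The output bias contributes \<open>1\<close> to \<open>\<parallel>h\<parallel>\<^sup>2\<close>, and neuron \<open>i\<close> contributes \<open>\<alpha>\<^sub>i\<^sup>2 + \<parallel>\<beta>\<^sub>i\<parallel>\<^sup>2\<close>, where
  \<open>\<alpha>\<^sub>i\<close> and \<open>\<beta>\<^sub>i\<close> are its mean gradients with respect to the output weight and to the input
  parameters. Writing the neuron in normalised form \<open>a\<^sub>i relu (v\<^sub>i \<bullet> x - b\<^sub>i)\<close> with
  \<open>\<parallel>v\<^sub>i\<parallel> = 1\<close>, a direct computation gives \<open>\<alpha>\<^sub>i \<parallel>\<beta>\<^sub>i\<parallel> = \<bar>a\<^sub>i\<bar> g_tilde (v\<^sub>i, b\<^sub>i)\<close>, so by AM-GM the contribution is at least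
  \<open>2 \<bar>a\<^sub>i\<bar> g (v\<^sub>i, b\<^sub>i)\<close>. Finally, two ReLU representations of the same function, up to an affine
  function, put the same total weight on every hyperplane (restrict to a generic line and compare
  the slope jumps at each kink), so the weighted Radon norm is at most \<open>\<Sum>\<^sub>i \<bar>a\<^sub>i\<bar> g (v\<^sub>i, b\<^sub>i)\<close>.\<close>

section \<open>Second-order expansions\<close>

lemma has_derivative_grad:
  fixes F :: "'a::euclidean_space \<Rightarrow> real"
  assumes "F differentiable (at w)"
  shows "(F has_derivative (\<lambda>p. grad F w \<bullet> p)) (at w)"
proof -
  let ?F' = "frechet_derivative F (at w)"
  have F': "(F has_derivative ?F') (at w)"
    using assms frechet_derivative_works by blast
  have "?F' p = grad F w \<bullet> p" for p
  proof -
    have "?F' p = ?F' (\<Sum>e\<in>Basis. (p \<bullet> e) *\<^sub>R e)"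
      by (simp add: euclidean_representation)
    also have "\<dots> = (\<Sum>e\<in>Basis. (p \<bullet> e) * ?F' e)"
      using has_derivative_linear[OF F'] by (simp add: linear_sum linear_scale)
    also have "\<dots> = grad F w \<bullet> p"
      unfolding grad_def inner_sum_left inner_scaleR_left by (simp add: inner_commute mult.commute)
    finally show ?thesis .
  qed
  then have "?F' = (\<lambda>p. grad F w \<bullet> p)"
    by (rule ext)
  with F' show ?thesis
    by simp
qed

lemma has_real_derivative_along_line:
  fixes F :: "'a::euclidean_space \<Rightarrow> real"
  assumes "F differentiable (at (p + t *\<^sub>R u))"
  shows "((\<lambda>t. F (p + t *\<^sub>R u)) has_real_derivative grad F (p + t *\<^sub>R u) \<bullet> u) (at t)"
proof -
  have "((\<lambda>t. p + t *\<^sub>R u) has_derivative (\<lambda>t. t *\<^sub>R u)) (at t)"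
    by (auto intro!: derivative_eq_intros)
  from has_derivative_compose[OF this has_derivative_grad[OF assms]]
  show ?thesis
    by (auto intro: has_derivative_imp_has_field_derivative simp: mult.commute)
qed

lemma twice_diff_hessian_linear: "twice_diff_hessian F z H \<Longrightarrow> linear H"
  unfolding twice_diff_hessian_def using has_derivative_linear by blast

lemma twice_diff_hessian_local:
  fixes F :: "'a::euclidean_space \<Rightarrow> real"
  assumes "twice_diff_hessian F z H" "e > 0"
  shows "\<exists>d>0. \<forall>w. norm (w - z) < d \<longrightarrow> F differentiable (at w) \<and>
           norm (grad F w - grad F z - H (w - z)) \<le> e * norm (w - z)"
proof -
  obtain S where "open S" "z \<in> S" and diff: "\<forall>w\<in>S. F differentiable (at w)"
    and H: "(grad F has_derivative H) (at z)"
    using assms(1) unfolding twice_diff_hessian_def by blast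
  then obtain r where "r > 0" and r: "ball z r \<subseteq> S"
    using open_contains_ball by blast
  obtain d where "d > 0" and d: "\<forall>w. norm (w - z) < d \<longrightarrow>
      norm (grad F w - grad F z - H (w - z)) \<le> e * norm (w - z)"
    using H assms(2) unfolding has_derivative_at_alt by blast
  have "F differentiable (at w)" if "norm (w - z) < r" for w
  proof -
    have "w \<in> ball z r"
      using that by (simp add: dist_norm norm_minus_commute)
    then show ?thesis
      using r diff by blast
  qed
  with d show ?thesis
    using \<open>r > 0\<close> \<open>d > 0\<close> by (intro exI[of _ "min d r"]) auto
qed

lemma norm_segment_less:
  fixes p u z :: "'a::real_normed_vector"
  assumes "norm (p - z) < d" "norm (p + u - z) < d" "0 \<le> t" "t \<le> 1"
  shows "norm (p + t *\<^sub>R u - z) < d"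
proof -
  have "p + t *\<^sub>R u - z = (1 - t) *\<^sub>R (p - z) + t *\<^sub>R (p + u - z)"
    by (simp add: algebra_simps)
  then have "norm (p + t *\<^sub>R u - z) \<le> (1 - t) * norm (p - z) + t * norm (p + u - z)"
    using assms(3,4) norm_triangle_ineq[of "(1 - t) *\<^sub>R (p - z)" "t *\<^sub>R (p + u - z)"] by simp
  also have "\<dots> < d"
    using assms by (intro convex_bound_lt) auto
  finally show ?thesis .
qed

text \<open>Mean value theorem for the second-order remainder along the segment from \<open>p\<close> to \<open>p + u\<close>.\<close>
lemma hessian_remainder_in_ball:
  fixes F :: "'a::euclidean_space \<Rightarrow> real"
  assumes "linear H" and "e \<ge> 0"
    and d: "\<And>w. norm (w - z) < d \<Longrightarrow> F differentiable (at w) \<and>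
              norm (grad F w - grad F z - H (w - z)) \<le> e * norm (w - z)"
    and p: "norm (p - z) < d" and pu: "norm (p + u - z) < d"
  shows "\<bar>F (p + u) - F p - grad F z \<bullet> u - H (p - z) \<bullet> u - H u \<bullet> u / 2\<bar>
           \<le> e * (norm (p - z) + norm u) * norm u"
proof -
  define \<phi> where "\<phi> t = F (p + t *\<^sub>R u) - t * (grad F z \<bullet> u) - t * (H (p - z) \<bullet> u)
      - t\<^sup>2 / 2 * (H u \<bullet> u)" for t
  define \<phi>' where "\<phi>' t = (grad F (p + t *\<^sub>R u) - grad F z - H (p + t *\<^sub>R u - z)) \<bullet> u" for t
  note near = norm_segment_less[OF p pu]
  have "(\<phi> has_real_derivative \<phi>' t) (at t)" if "0 \<le> t" "t \<le> 1" for t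
  proof -
    have "H (p + t *\<^sub>R u - z) = H ((p - z) + t *\<^sub>R u)"
      by (simp add: algebra_simps)
    then have "H (p + t *\<^sub>R u - z) \<bullet> u = H (p - z) \<bullet> u + t * (H u \<bullet> u)"
      using \<open>linear H\<close> by (simp add: linear_add linear_scale inner_add_left)
    moreover have "F differentiable (at (p + t *\<^sub>R u))"
      using d near[OF that] by blast
    ultimately show ?thesis
      unfolding \<phi>_def \<phi>'_def inner_diff_left
      by (auto intro!: derivative_eq_intros has_real_derivative_along_line simp: power2_eq_square)
  qed
  then obtain t where t: "0 < t" "t < 1" and mvt: "\<phi> 1 - \<phi> 0 = \<phi>' t"
    using MVT2[of 0 1 \<phi> \<phi>'] by auto
  have "norm (p + t *\<^sub>R u - z) \<le> norm (p - z) + norm (t *\<^sub>R u)"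
    using norm_triangle_ineq[of "p - z" "t *\<^sub>R u"] by (simp add: algebra_simps)
  also have "\<dots> \<le> norm (p - z) + norm u"
    using t by (simp add: mult_left_le_one_le)
  finally have "norm (p + t *\<^sub>R u - z) \<le> norm (p - z) + norm u" .
  moreover have "\<bar>\<phi>' t\<bar> \<le> norm (grad F (p + t *\<^sub>R u) - grad F z - H (p + t *\<^sub>R u - z)) * norm u"
    unfolding \<phi>'_def by (rule Cauchy_Schwarz_ineq2)
  ultimately have "\<bar>\<phi>' t\<bar> \<le> e * (norm (p - z) + norm u) * norm u"
    using d[of "p + t *\<^sub>R u"] near[of t] t \<open>e \<ge> 0\<close>
    by (smt (verit) mult_left_mono mult_right_mono norm_ge_zero)
  then show ?thesis
    using mvt unfolding \<phi>_def by simp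
qed

lemma hessian_remainder:
  fixes F :: "'a::euclidean_space \<Rightarrow> real"
  assumes th: "twice_diff_hessian F z H" and "e > 0"
  shows "\<exists>d>0. \<forall>p u. norm (p - z) < d \<longrightarrow> norm (p + u - z) < d \<longrightarrow>
           \<bar>F (p + u) - F p - grad F z \<bullet> u - H (p - z) \<bullet> u - H u \<bullet> u / 2\<bar>
             \<le> e * (norm (p - z) + norm u) * norm u"
proof -
  have "linear H"
    using th by (rule twice_diff_hessian_linear)
  moreover obtain d where "d > 0" and "\<forall>w. norm (w - z) < d \<longrightarrow> F differentiable (at w) \<and>
      norm (grad F w - grad F z - H (w - z)) \<le> e * norm (w - z)"
    using twice_diff_hessian_local[OF assms] by blast
  ultimately show ?thesis
    using hessian_remainder_in_ball[of H e z d F] \<open>e > 0\<close> by auto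
qed

lemma tendsto_div_square_at_right_0:
  fixes f :: "real \<Rightarrow> real"
  assumes "\<And>e. e > 0 \<Longrightarrow> eventually (\<lambda>s. \<bar>f s - L * s\<^sup>2\<bar> \<le> e * s\<^sup>2) (at_right 0)"
  shows "((\<lambda>s. f s / s\<^sup>2) \<longlongrightarrow> L) (at_right 0)"
proof (rule tendstoI)
  fix e :: real
  assume "e > 0"
  have "eventually (\<lambda>s. \<bar>f s - L * s\<^sup>2\<bar> \<le> e / 2 * s\<^sup>2 \<and> s > 0) (at_right 0)"
    using assms[of "e / 2"] \<open>e > 0\<close> eventually_at_right_less[of 0] by (auto elim: eventually_conj)
  then show "eventually (\<lambda>s. dist (f s / s\<^sup>2) L < e) (at_right 0)"
  proof eventually_elim
    case (elim s)
    then have "\<bar>f s / s\<^sup>2 - L\<bar> = \<bar>f s - L * s\<^sup>2\<bar> / s\<^sup>2"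
      by (simp add: field_simps)
    also have "\<dots> \<le> e / 2"
      using elim by (simp add: divide_le_eq)
    finally show ?case
      using \<open>e > 0\<close> by (simp add: dist_real_def)
  qed
qed

lemma eventually_at_right_0_mult_less:
  fixes c d :: real
  assumes "d > 0"
  shows "eventually (\<lambda>s. s * c < d) (at_right 0)"
proof -
  have "((\<lambda>s. s * c) \<longlongrightarrow> 0 * c) (at_right 0)"
    by (intro tendsto_intros)
  then show ?thesis
    using assms by (auto dest: order_tendstoD(2))
qed

text \<open>The second difference picks up the non-symmetrised bilinear form \<open>H k \<bullet> h\<close>, since only
  the base point moves in direction \<open>k\<close>.\<close>
lemma tendsto_second_difference:
  fixes F :: "'a::euclidean_space \<Rightarrow> real"
  assumes th: "twice_diff_hessian F z H"
  shows "((\<lambda>s. (F (z + s *\<^sub>R k + s *\<^sub>R h) - F (z + s *\<^sub>R k) - F (z + s *\<^sub>R h) + F z) / s\<^sup>2)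
           \<longlongrightarrow> H k \<bullet> h) (at_right 0)"
proof (rule tendsto_div_square_at_right_0)
  fix e :: real
  assume "e > 0"
  have lin: "linear H"
    using th by (rule twice_diff_hessian_linear)
  define C where "C = (norm k + 2 * norm h) * norm h + 1"
  have "C > 0"
    unfolding C_def by (simp add: add_nonneg_pos)
  obtain d where "d > 0" and d: "\<And>p u. norm (p - z) < d \<Longrightarrow> norm (p + u - z) < d \<Longrightarrow>
      \<bar>F (p + u) - F p - grad F z \<bullet> u - H (p - z) \<bullet> u - H u \<bullet> u / 2\<bar>
        \<le> e / C * (norm (p - z) + norm u) * norm u"
    using hessian_remainder[OF th, of "e / C"] \<open>e > 0\<close> \<open>C > 0\<close> by auto
  show "eventually (\<lambda>s. \<bar>F (z + s *\<^sub>R k + s *\<^sub>R h) - F (z + s *\<^sub>R k) - F (z + s *\<^sub>R h) + F z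
      - H k \<bullet> h * s\<^sup>2\<bar> \<le> e * s\<^sup>2) (at_right 0)"
    using eventually_at_right_0_mult_less[OF \<open>d > 0\<close>, of "norm k + norm h"]
      eventually_at_right_less[of 0]
  proof eventually_elim
    case (elim s)
    have norms: "norm (s *\<^sub>R k) = s * norm k" "norm (s *\<^sub>R h) = s * norm h"
      "s * norm k \<ge> 0" "s * norm h \<ge> 0" "s * norm k + s * norm h < d"
      using elim by (simp_all add: distrib_left)
    have near: "norm (s *\<^sub>R k) < d" "norm (s *\<^sub>R k + s *\<^sub>R h) < d" "norm (s *\<^sub>R h) < d"
      using norms norm_triangle_ineq[of "s *\<^sub>R k" "s *\<^sub>R h"] by linarith+
    have R1: "\<bar>F (z + s *\<^sub>R k + s *\<^sub>R h) - F (z + s *\<^sub>R k) - grad F z \<bullet> (s *\<^sub>R h)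
        - H k \<bullet> h * s\<^sup>2 - H (s *\<^sub>R h) \<bullet> (s *\<^sub>R h) / 2\<bar>
        \<le> e / C * (s * norm k + s * norm h) * (s * norm h)"
      using d[of "z + s *\<^sub>R k" "s *\<^sub>R h"] near elim lin
      by (simp add: linear_scale power2_eq_square algebra_simps)
    have R2: "\<bar>F (z + s *\<^sub>R h) - F z - grad F z \<bullet> (s *\<^sub>R h) - H (s *\<^sub>R h) \<bullet> (s *\<^sub>R h) / 2\<bar>
        \<le> e / C * (s * norm h) * (s * norm h)"
      using d[of z "s *\<^sub>R h"] near elim lin \<open>d > 0\<close> by (simp add: linear_0)
    have "(s * norm k + s * norm h) * (s * norm h) + (s * norm h) * (s * norm h) = (C - 1) * s\<^sup>2"
      unfolding C_def by (simp add: power2_eq_square algebra_simps)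
    then have "e / C * (s * norm k + s * norm h) * (s * norm h) + e / C * (s * norm h) * (s * norm h)
        = e / C * (C - 1) * s\<^sup>2"
      by (simp only: mult.assoc distrib_left[symmetric])
    also have "\<dots> \<le> e * s\<^sup>2"
      using \<open>e > 0\<close> \<open>C > 0\<close> by (simp add: field_simps)
    finally show ?case
      using R1 R2 by linarith
  qed
qed

lemma twice_diff_hessian_symmetric:
  fixes F :: "'a::euclidean_space \<Rightarrow> real"
  assumes "twice_diff_hessian F z H"
  shows "H k \<bullet> h = H h \<bullet> k"
proof -
  have "z + s *\<^sub>R h + s *\<^sub>R k = z + s *\<^sub>R k + s *\<^sub>R h" for s
    by (simp add: algebra_simps)
  then have "((\<lambda>s. (F (z + s *\<^sub>R k + s *\<^sub>R h) - F (z + s *\<^sub>R k) - F (z + s *\<^sub>R h) + F z) / s\<^sup>2)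
      \<longlongrightarrow> H h \<bullet> k) (at_right 0)"
    using tendsto_second_difference[OF assms, of h k] by (simp add: algebra_simps)
  with tendsto_second_difference[OF assms, of k h] show ?thesis
    using tendsto_unique[OF trivial_limit_at_right_real] by blast
qed

lemma tendsto_taylor_quotient:
  fixes F :: "'a::euclidean_space \<Rightarrow> real"
  assumes th: "twice_diff_hessian F z H" and "grad F z = 0"
  shows "((\<lambda>s. (F (z + s *\<^sub>R h) - F z) / s\<^sup>2) \<longlongrightarrow> H h \<bullet> h / 2) (at_right 0)"
proof (rule tendsto_div_square_at_right_0)
  fix e :: real
  assume "e > 0"
  have lin: "linear H"
    using th by (rule twice_diff_hessian_linear)
  define C where "C = (norm h)\<^sup>2 + 1"
  have "C > 0"
    unfolding C_def by (simp add: add_nonneg_pos)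
  obtain d where "d > 0" and d: "\<And>p u. norm (p - z) < d \<Longrightarrow> norm (p + u - z) < d \<Longrightarrow>
      \<bar>F (p + u) - F p - grad F z \<bullet> u - H (p - z) \<bullet> u - H u \<bullet> u / 2\<bar>
        \<le> e / C * (norm (p - z) + norm u) * norm u"
    using hessian_remainder[OF th, of "e / C"] \<open>e > 0\<close> \<open>C > 0\<close> by auto
  show "eventually (\<lambda>s. \<bar>F (z + s *\<^sub>R h) - F z - H h \<bullet> h / 2 * s\<^sup>2\<bar> \<le> e * s\<^sup>2) (at_right 0)"
    using eventually_at_right_0_mult_less[OF \<open>d > 0\<close>, of "norm h"] eventually_at_right_less[of 0]
  proof eventually_elim
    case (elim s)
    have "\<bar>F (z + s *\<^sub>R h) - F z - H h \<bullet> h / 2 * s\<^sup>2\<bar> \<le> e / C * (s * norm h) * (s * norm h)"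
      using d[of z "s *\<^sub>R h"] elim lin \<open>grad F z = 0\<close> \<open>d > 0\<close>
      by (simp add: linear_0 linear_scale power2_eq_square algebra_simps)
    also have "\<dots> = e / C * (C - 1) * s\<^sup>2"
      unfolding C_def by (simp add: power2_eq_square algebra_simps)
    also have "\<dots> \<le> e * s\<^sup>2"
      using \<open>e > 0\<close> \<open>C > 0\<close> by (simp add: field_simps)
    finally show ?case .
  qed
qed

lemma grad_eq_0_at_minimum:
  fixes F :: "'a::euclidean_space \<Rightarrow> real"
  assumes "F differentiable (at z)" and "\<forall>w. F z \<le> F w"
  shows "grad F z = 0"
proof -
  have "(\<lambda>p. grad F z \<bullet> p) = (\<lambda>p. 0)"
    using has_derivative_local_min[OF has_derivative_grad[OF assms(1)]] assms(2) by simp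
  then have "grad F z \<bullet> grad F z = 0"
    by (rule fun_cong)
  then show ?thesis
    by simp
qed

section \<open>Rayleigh quotient and the largest eigenvalue\<close>

lemma finite_eigenvalues_if_symmetric:
  fixes H :: "'a::euclidean_space \<Rightarrow> 'a"
  assumes sym: "\<And>u w. H u \<bullet> w = u \<bullet> H w"
  shows "finite {l. \<exists>u. u \<noteq> 0 \<and> H u = l *\<^sub>R u}"
proof -
  define E where "E = {l. \<exists>u. u \<noteq> 0 \<and> H u = l *\<^sub>R u}"
  define vec where "vec l = (SOME u. u \<noteq> 0 \<and> H u = l *\<^sub>R u)" for l
  have vec: "vec l \<noteq> 0" "H (vec l) = l *\<^sub>R vec l" if "l \<in> E" for l
    using someI_ex[of "\<lambda>u. u \<noteq> 0 \<and> H u = l *\<^sub>R u"] that unfolding E_def vec_def by auto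
  have "inj_on vec E"
    by (rule inj_onI) (metis vec scaleR_cancel_right)
  moreover have "pairwise orthogonal (vec ` E)"
  proof (rule pairwiseI)
    fix x y
    assume "x \<in> vec ` E" "y \<in> vec ` E" "x \<noteq> y"
    then obtain l l' where "l \<in> E" "l' \<in> E" "x = vec l" "y = vec l'" "l \<noteq> l'"
      by blast
    then have "l * (x \<bullet> y) = l' * (x \<bullet> y)"
      using sym[of x y] vec by simp
    then show "orthogonal x y"
      using \<open>l \<noteq> l'\<close> by (simp add: orthogonal_def)
  qed
  moreover have "0 \<notin> vec ` E"
    using vec by auto
  ultimately have "finite (vec ` E)"
    using pairwise_orthogonal_independent independent_bound by blast
  with \<open>inj_on vec E\<close> show ?thesis
    unfolding E_def[symmetric] using finite_imageD by blast
qed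

lemma rayleigh_quotient_attains_max:
  fixes H :: "'a::euclidean_space \<Rightarrow> 'a"
  assumes "linear H"
  obtains u where "norm u = 1" "\<And>y. y \<bullet> H y \<le> (u \<bullet> H u) * (norm y)\<^sup>2"
proof -
  have "sphere (0::'a) 1 \<noteq> {}"
    using nonempty_Basis by (auto simp: norm_Basis)
  moreover have "continuous_on (sphere 0 1) (\<lambda>y. y \<bullet> H y)"
    using assms by (intro continuous_intros linear_continuous_on linear_conv_bounded_linear[THEN iffD1])
  ultimately obtain u where u: "u \<in> sphere 0 1" and max: "\<forall>y\<in>sphere 0 1. y \<bullet> H y \<le> u \<bullet> H u"
    using continuous_attains_sup[OF compact_sphere] by blast
  have "y \<bullet> H y \<le> (u \<bullet> H u) * (norm y)\<^sup>2" for y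
  proof (cases "y = 0")
    case True
    then show ?thesis
      using assms by (simp add: linear_0)
  next
    case False
    have "sgn y \<bullet> H (sgn y) \<le> u \<bullet> H u"
      using max False by (simp add: norm_sgn)
    moreover have "y = norm y *\<^sub>R sgn y"
      using False by (simp add: sgn_div_norm)
    then have "y \<bullet> H y = (norm y)\<^sup>2 * (sgn y \<bullet> H (sgn y))"
      using assms by (metis inner_scaleR_left inner_scaleR_right linear_scale mult.assoc power2_eq_square)
    ultimately show ?thesis
      by (simp add: mult_left_mono mult.commute[of _ "(norm y)\<^sup>2"])
  qed
  with u that show ?thesis
    by simp
qed

lemma nonpos_if_le_quadratic:
  fixes A C :: real
  assumes "\<And>t. t > 0 \<Longrightarrow> t * A \<le> t\<^sup>2 * C"
  shows "A \<le> 0"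
proof (rule ccontr)
  assume "\<not> A \<le> 0"
  define t where "t = A / (\<bar>C\<bar> + 1)"
  have "t > 0"
    using \<open>\<not> A \<le> 0\<close> by (simp add: t_def add_nonneg_pos)
  then have "A \<le> t * C"
    using assms[of t] by (simp add: power2_eq_square mult.assoc)
  also have "\<dots> \<le> t * \<bar>C\<bar>"
    using \<open>t > 0\<close> by (simp add: mult_left_mono)
  also have "\<dots> < A"
    using \<open>\<not> A \<le> 0\<close> by (simp add: t_def field_simps)
  finally show False
    by simp
qed

text \<open>If \<open>y \<mapsto> y \<bullet> H y - l * \<parallel>y\<parallel>\<^sup>2\<close> is maximal (namely zero) at the unit vector \<open>u\<close>, its first
  variation in the direction \<open>w = H u - l u\<close> is \<open>2 \<parallel>w\<parallel>\<^sup>2\<close>, so \<open>w\<close> must vanish.\<close>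
lemma rayleigh_maximizer_is_eigenvector:
  fixes H :: "'a::euclidean_space \<Rightarrow> 'a"
  assumes lin: "linear H" and sym: "\<And>u w. H u \<bullet> w = u \<bullet> H w"
    and "norm u = 1" and max: "\<And>y. y \<bullet> H y \<le> (u \<bullet> H u) * (norm y)\<^sup>2"
  shows "H u = (u \<bullet> H u) *\<^sub>R u"
proof -
  define l where "l = u \<bullet> H u"
  define w where "w = H u - l *\<^sub>R u"
  have uu: "u \<bullet> u = 1"
    using \<open>norm u = 1\<close> by (simp add: dot_square_norm)
  have "u \<bullet> w = u \<bullet> H u - l * (u \<bullet> u)"
    unfolding w_def by (simp add: inner_diff_right)
  also have "\<dots> = 0"
    unfolding uu l_def by simp
  finally have uw: "u \<bullet> w = 0" .
  have "H u = w + l *\<^sub>R u"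
    by (simp add: w_def)
  then have wHu: "w \<bullet> H u = w \<bullet> w"
    using uw by (simp add: inner_add_right inner_commute)
  have "t * (2 * (w \<bullet> w)) \<le> t\<^sup>2 * (l * (w \<bullet> w) - w \<bullet> H w)" for t
  proof -
    have "(u + t *\<^sub>R w) \<bullet> H (u + t *\<^sub>R w) = l + 2 * t * (w \<bullet> w) + t\<^sup>2 * (w \<bullet> H w)"
      using lin sym[of w u] wHu
      by (simp add: l_def linear_add linear_scale inner_add_left inner_add_right power2_eq_square
          inner_commute algebra_simps)
    moreover have "(norm (u + t *\<^sub>R w))\<^sup>2 = 1 + t\<^sup>2 * (w \<bullet> w)"
      unfolding power2_norm_eq_inner using uu uw
      by (simp add: inner_add_left inner_add_right inner_commute power2_eq_square)
    ultimately show ?thesis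
      using max[of "u + t *\<^sub>R w"] unfolding l_def by (simp add: algebra_simps)
  qed
  then have "2 * (w \<bullet> w) \<le> 0"
    by (intro nonpos_if_le_quadratic)
  then have "w = 0"
    using inner_ge_zero[of w] by simp
  then show ?thesis
    by (simp add: w_def l_def)
qed

lemma quadratic_form_le_lambda_max:
  fixes H :: "'a::euclidean_space \<Rightarrow> 'a"
  assumes "linear H" and sym: "\<And>u w. H u \<bullet> w = u \<bullet> H w"
  shows "h \<bullet> H h \<le> lambda_max H * (norm h)\<^sup>2"
proof -
  obtain u where u: "norm u = 1" and max: "\<And>y. y \<bullet> H y \<le> (u \<bullet> H u) * (norm y)\<^sup>2"
    using rayleigh_quotient_attains_max[OF assms(1)] by blast
  have "H u = (u \<bullet> H u) *\<^sub>R u"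
    using rayleigh_maximizer_is_eigenvector[OF assms u max] .
  with u have "u \<bullet> H u \<in> {l. \<exists>u. u \<noteq> 0 \<and> H u = l *\<^sub>R u}"
    by (intro CollectI exI[of _ u]) auto
  then have "u \<bullet> H u \<le> lambda_max H"
    unfolding lambda_max_def by (rule Max_ge[OF finite_eigenvalues_if_symmetric[OF sym]])
  then have "(u \<bullet> H u) * (norm h)\<^sup>2 \<le> lambda_max H * (norm h)\<^sup>2"
    by (rule mult_right_mono) simp
  then show ?thesis
    using max[of h] by linarith
qed

lemma hessian_quadratic_form_le_lambda_max:
  fixes F :: "'a::euclidean_space \<Rightarrow> real"
  assumes "twice_diff_hessian F z H"
  shows "H h \<bullet> h \<le> lambda_max H * (norm h)\<^sup>2"
proof -
  have "H u \<bullet> w = u \<bullet> H w" for u w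
    using twice_diff_hessian_symmetric[OF assms, of u w] by (simp add: inner_commute)
  with twice_diff_hessian_linear[OF assms] show ?thesis
    using quadratic_form_le_lambda_max[of H h] by (simp add: inner_commute)
qed

section \<open>The loss Hessian at an interpolating minimum\<close>

lemma relu_scale_pos: "s > 0 \<Longrightarrow> relu (s * t) = s * relu t"
  unfolding relu_def by (simp add: max_mult_distrib_left)

lemma relu_nonneg: "relu t \<ge> 0"
  unfolding relu_def by simp

definition relu_dir_deriv :: "real \<Rightarrow> real \<Rightarrow> real" where
  "relu_dir_deriv p d = (if p > 0 then d else if p < 0 then 0 else relu d)"

lemma eventually_relu_add_scaled:
  "eventually (\<lambda>s. relu (p + s * d) = relu p + s * relu_dir_deriv p d) (at_right 0)"
proof -
  have lim: "((\<lambda>s. p + s * d) \<longlongrightarrow> p) (at_right 0)"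
    by (auto intro!: tendsto_eq_intros)
  consider "p > 0" | "p < 0" | "p = 0"
    by linarith
  then show ?thesis
  proof cases
    case 1
    then show ?thesis
      using order_tendstoD(1)[OF lim 1]
      by (auto elim!: eventually_mono simp: relu_def relu_dir_deriv_def)
  next
    case 2
    then show ?thesis
      using order_tendstoD(2)[OF lim 2] by (auto elim!: eventually_mono simp: relu_def relu_dir_deriv_def)
  next
    case 3
    have "relu (s * d) = s * relu d" if "s > 0" for s
      using relu_scale_pos[OF that] .
    with 3 show ?thesis
      using eventually_at_right_less[of 0]
      by (auto elim!: eventually_mono simp: relu_dir_deriv_def relu_def)
  qed
qed

text \<open>For small \<open>s > 0\<close> the map \<open>s \<mapsto> net (\<theta> + s h) z\<close> is exactly quadratic; these are its
  coefficients of \<open>s\<close> and \<open>s\<^sup>2\<close>.\<close>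
definition net_dir_deriv :: "('d::finite, 'k::finite) params \<Rightarrow> ('d, 'k) params \<Rightarrow> real^'d \<Rightarrow> real" where
  "net_dir_deriv \<theta> h z = (case \<theta> of (W, B1, W2, b2) \<Rightarrow> case h of (HW, HB1, HW2, hb2) \<Rightarrow>
     hb2 + (\<Sum>i\<in>UNIV. HW2 $ i * relu (z \<bullet> W $ i + B1 $ i)
       + W2 $ i * relu_dir_deriv (z \<bullet> W $ i + B1 $ i) (z \<bullet> HW $ i + HB1 $ i)))"

definition net_dir_second :: "('d::finite, 'k::finite) params \<Rightarrow> ('d, 'k) params \<Rightarrow> real^'d \<Rightarrow> real" where
  "net_dir_second \<theta> h z = (case \<theta> of (W, B1, W2, b2) \<Rightarrow> case h of (HW, HB1, HW2, hb2) \<Rightarrow>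
     (\<Sum>i\<in>UNIV. HW2 $ i * relu_dir_deriv (z \<bullet> W $ i + B1 $ i) (z \<bullet> HW $ i + HB1 $ i)))"

lemma eventually_net_add_scaled:
  fixes \<theta> h :: "('d::finite, 'k::finite) params"
  shows "eventually (\<lambda>s. net (\<theta> + s *\<^sub>R h) z
           = net \<theta> z + s * net_dir_deriv \<theta> h z + s\<^sup>2 * net_dir_second \<theta> h z) (at_right 0)"
proof -
  obtain W B1 W2 b2 where \<theta>: "\<theta> = (W, B1, W2, b2)"
    by (cases \<theta>) auto
  obtain HW HB1 HW2 hb2 where h: "h = (HW, HB1, HW2, hb2)"
    by (cases h) auto
  define p where "p i = z \<bullet> W $ i + B1 $ i" for i
  define d where "d i = z \<bullet> HW $ i + HB1 $ i" for i
  have "eventually (\<lambda>s. \<forall>i. relu (p i + s * d i) = relu (p i) + s * relu_dir_deriv (p i) (d i))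
      (at_right 0)"
    by (intro eventually_all_finite) (rule eventually_relu_add_scaled)
  then show ?thesis
  proof eventually_elim
    case (elim s)
    have "net (\<theta> + s *\<^sub>R h) z = (\<Sum>i\<in>UNIV. (W2 $ i + s * HW2 $ i) * relu (p i + s * d i)) + (b2 + s * hb2)"
      unfolding \<theta> h net_def p_def d_def by (simp add: inner_add_right algebra_simps)
    also have "\<dots> = (\<Sum>i\<in>UNIV. W2 $ i * relu (p i)
        + s * (HW2 $ i * relu (p i) + W2 $ i * relu_dir_deriv (p i) (d i))
        + s\<^sup>2 * (HW2 $ i * relu_dir_deriv (p i) (d i))) + (b2 + s * hb2)"
      using elim by (simp add: algebra_simps power2_eq_square)
    also have "\<dots> = net \<theta> z + s * net_dir_deriv \<theta> h z + s\<^sup>2 * net_dir_second \<theta> h z"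
      unfolding \<theta> h net_def net_dir_deriv_def net_dir_second_def p_def d_def
      by (simp add: sum.distrib sum_distrib_left algebra_simps inner_commute)
    finally show ?case .
  qed
qed

lemma eventually_loss_add_scaled:
  assumes "\<forall>j<n. net \<theta> (x j) = y j"
  shows "eventually (\<lambda>s. loss n x y (\<theta> + s *\<^sub>R h) = s\<^sup>2 * (1 / (2 * real n) *
           (\<Sum>j<n. (net_dir_deriv \<theta> h (x j) + s * net_dir_second \<theta> h (x j))\<^sup>2))) (at_right 0)"
proof -
  have "eventually (\<lambda>s. \<forall>j\<in>{..<n}. net (\<theta> + s *\<^sub>R h) (x j)
      = net \<theta> (x j) + s * net_dir_deriv \<theta> h (x j) + s\<^sup>2 * net_dir_second \<theta> h (x j)) (at_right 0)"
    by (intro eventually_ball_finite ballI eventually_net_add_scaled) simp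
  then show ?thesis
  proof eventually_elim
    case (elim s)
    then have "(\<Sum>j<n. (net (\<theta> + s *\<^sub>R h) (x j) - y j)\<^sup>2)
        = (\<Sum>j<n. s\<^sup>2 * (net_dir_deriv \<theta> h (x j) + s * net_dir_second \<theta> h (x j))\<^sup>2)"
      using assms by (intro sum.cong) (auto simp: power2_eq_square algebra_simps)
    then show ?case
      unfolding loss_def by (simp add: sum_distrib_left[symmetric])
  qed
qed

lemma hessian_loss_at_interpolating_minimum:
  fixes \<theta> :: "('d::finite, 'k::finite) params"
  assumes min: "\<forall>\<theta>' :: ('d, 'k) params. loss n x y \<theta> \<le> loss n x y \<theta>'"
    and hess: "twice_diff_hessian (loss n x y) \<theta> H"
    and interp: "\<forall>j<n. net \<theta> (x j) = y j"
  shows "H h \<bullet> h = 1 / real n * (\<Sum>j<n. (net_dir_deriv \<theta> h (x j))\<^sup>2)"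
proof -
  let ?L = "loss n x y"
  let ?q = "\<lambda>s. 1 / (2 * real n) * (\<Sum>j<n. (net_dir_deriv \<theta> h (x j) + s * net_dir_second \<theta> h (x j))\<^sup>2)"
  have "?L differentiable (at \<theta>)"
    using hess unfolding twice_diff_hessian_def by blast
  then have "grad ?L \<theta> = 0"
    using min by (rule grad_eq_0_at_minimum)
  then have taylor: "((\<lambda>s. (?L (\<theta> + s *\<^sub>R h) - ?L \<theta>) / s\<^sup>2) \<longlongrightarrow> H h \<bullet> h / 2) (at_right 0)"
    by (rule tendsto_taylor_quotient[OF hess])
  have "?L \<theta> = 0"
    unfolding loss_def using interp by simp
  have "eventually (\<lambda>s. (?L (\<theta> + s *\<^sub>R h) - ?L \<theta>) / s\<^sup>2 = ?q s) (at_right 0)"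
    using eventually_loss_add_scaled[OF interp, of h] eventually_at_right_less[of 0]
    by eventually_elim (simp add: \<open>?L \<theta> = 0\<close>)
  with taylor have "(?q \<longlongrightarrow> H h \<bullet> h / 2) (at_right 0)"
    by (rule Lim_transform_eventually)
  moreover have "(?q \<longlongrightarrow> ?q 0) (at_right 0)"
    by (intro tendsto_intros)
  ultimately have "H h \<bullet> h / 2 = ?q 0"
    using tendsto_unique[OF trivial_limit_at_right_real] by blast
  then show ?thesis
    by simp
qed

text \<open>Perturbing the bias of neuron \<open>i\<close> by \<open>\<pm>1\<close> gives the same value of the quadratic form
  \<open>H h \<bullet> h\<close>, but a sample on the kink contributes to the directional derivative only in the
  \<open>+1\<close> direction.\<close>
lemma sample_off_kink:
  fixes \<theta> :: "('d::finite, 'k::finite) params"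
  assumes min: "\<forall>\<theta>' :: ('d, 'k) params. loss n x y \<theta> \<le> loss n x y \<theta>'"
    and hess: "twice_diff_hessian (loss n x y) \<theta> H"
    and interp: "\<forall>j<n. net \<theta> (x j) = y j"
    and \<theta>: "\<theta> = (W, B1, W2, b2)" and "W2 $ i \<noteq> 0" and "j < n"
  shows "x j \<bullet> W $ i + B1 $ i \<noteq> 0"
proof
  assume kink: "x j \<bullet> W $ i + B1 $ i = 0"
  define e :: "real \<Rightarrow> ('d, 'k) params" where
    "e c = (0, \<chi> k. if k = i then c else 0, 0, 0)" for c
  define r where "r c l = (W2 $ i * relu_dir_deriv (x l \<bullet> W $ i + B1 $ i) c)\<^sup>2" for c l
  have "linear H"
    using hess by (rule twice_diff_hessian_linear)
  moreover have "e (-1) = - e 1"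
    by (simp add: e_def vec_eq_iff)
  ultimately have "H (e (-1)) \<bullet> e (-1) = H (e 1) \<bullet> e 1"
    by (simp add: linear_neg)
  moreover have "net_dir_deriv \<theta> (e c) z = W2 $ i * relu_dir_deriv (z \<bullet> W $ i + B1 $ i) c" for c z
  proof -
    have "net_dir_deriv \<theta> (e c) z
        = (\<Sum>k\<in>UNIV. W2 $ k * relu_dir_deriv (z \<bullet> W $ k + B1 $ k) (if k = i then c else 0))"
      unfolding \<theta> e_def net_dir_deriv_def by simp
    also have "\<dots> = (\<Sum>k\<in>UNIV. if k = i then W2 $ i * relu_dir_deriv (z \<bullet> W $ i + B1 $ i) c else 0)"
      by (intro sum.cong) (auto simp: relu_dir_deriv_def relu_def)
    finally show ?thesis
      by simp
  qed
  ultimately have "(\<Sum>l<n. r (-1) l) = (\<Sum>l<n. r 1 l)"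
    using hessian_loss_at_interpolating_minimum[OF min hess interp] \<open>j < n\<close>
    by (simp add: r_def)
  moreover have "(\<Sum>l<n. r (-1) l) < (\<Sum>l<n. r 1 l)"
  proof (rule sum_strict_mono_ex1)
    show "\<forall>l\<in>{..<n}. r (-1) l \<le> r 1 l"
      by (auto simp: r_def relu_dir_deriv_def relu_def power_mult_distrib)
    show "\<exists>l\<in>{..<n}. r (-1) l < r 1 l"
      using \<open>j < n\<close> kink \<open>W2 $ i \<noteq> 0\<close>
      by (intro bexI[of _ j]) (auto simp: r_def relu_dir_deriv_def relu_def)
  qed simp
  ultimately show False
    by simp
qed

text \<open>The gradient of \<open>\<theta> \<mapsto> net \<theta> z\<close>, valid wherever no neuron with nonzero output weight
  has its kink at \<open>z\<close>.\<close>
definition net_grad :: "('d::finite, 'k::finite) params \<Rightarrow> real^'d \<Rightarrow> ('d, 'k) params" where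
  "net_grad \<theta> z = (case \<theta> of (W, B1, W2, b2) \<Rightarrow>
     ((\<chi> i. (if z \<bullet> W $ i + B1 $ i > 0 then W2 $ i else 0) *\<^sub>R z),
      (\<chi> i. if z \<bullet> W $ i + B1 $ i > 0 then W2 $ i else 0),
      (\<chi> i. relu (z \<bullet> W $ i + B1 $ i)), 1))"

lemma net_dir_deriv_eq_inner_net_grad:
  assumes \<theta>: "\<theta> = (W, B1, W2, b2)"
    and off_kink: "\<And>i. W2 $ i \<noteq> 0 \<Longrightarrow> z \<bullet> W $ i + B1 $ i \<noteq> 0"
  shows "net_dir_deriv \<theta> h z = net_grad \<theta> z \<bullet> h"
proof -
  obtain HW HB1 HW2 hb2 where h: "h = (HW, HB1, HW2, hb2)"
    by (cases h) auto
  have "W2 $ i * relu_dir_deriv (z \<bullet> W $ i + B1 $ i) (z \<bullet> HW $ i + HB1 $ i)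
      = (if z \<bullet> W $ i + B1 $ i > 0 then W2 $ i else 0) * (z \<bullet> HW $ i + HB1 $ i)" for i
    using off_kink[of i] by (auto simp: relu_dir_deriv_def)
  then show ?thesis
    unfolding \<theta> h net_dir_deriv_def net_grad_def
    by (simp add: inner_vec_def sum.distrib algebra_simps) (simp add: sum_distrib_right mult.assoc)
qed

definition mean_net_grad :: "nat \<Rightarrow> (nat \<Rightarrow> real^'d) \<Rightarrow> ('d::finite, 'k::finite) params
                              \<Rightarrow> ('d, 'k) params" where
  "mean_net_grad n x \<theta> = (1 / real n) *\<^sub>R (\<Sum>j<n. net_grad \<theta> (x j))"

text \<open>Along the mean gradient \<open>h\<close> the directional derivatives at the samples average to
  \<open>\<parallel>h\<parallel>\<^sup>2\<close>, so by Cauchy-Schwarz \<open>H h \<bullet> h \<ge> \<parallel>h\<parallel>\<^sup>4\<close>.\<close>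
lemma norm_mean_net_grad_le_lambda_max:
  fixes \<theta> :: "('d::finite, 'k::finite) params"
  assumes "n > 0"
    and min: "\<forall>\<theta>' :: ('d, 'k) params. loss n x y \<theta> \<le> loss n x y \<theta>'"
    and hess: "twice_diff_hessian (loss n x y) \<theta> H"
    and interp: "\<forall>j<n. net \<theta> (x j) = y j"
  shows "(norm (mean_net_grad n x \<theta>))\<^sup>2 \<le> lambda_max H"
proof -
  define h where "h = mean_net_grad n x \<theta>"
  define D where "D j = net_dir_deriv \<theta> h (x j)" for j
  obtain W B1 W2 b2 where \<theta>: "\<theta> = (W, B1, W2, b2)"
    by (cases \<theta>) auto
  have "D j = net_grad \<theta> (x j) \<bullet> h" if "j < n" for j
    unfolding D_def using sample_off_kink[OF min hess interp \<theta> _ that]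
    by (intro net_dir_deriv_eq_inner_net_grad[OF \<theta>]) auto
  then have "(\<Sum>j<n. D j) = (\<Sum>j<n. net_grad \<theta> (x j)) \<bullet> h"
    by (simp add: inner_sum_left)
  also have "\<dots> = real n * (norm h)\<^sup>2"
    using \<open>n > 0\<close> by (simp add: h_def mean_net_grad_def dot_square_norm power_divide power2_eq_square)
  finally have "(real n * (norm h)\<^sup>2)\<^sup>2 \<le> (\<Sum>j<n. (D j)\<^sup>2) * real n"
    using sum_squared_le_sum_of_squares[of D "{..<n}"] by simp
  then have "real n * ((norm h)\<^sup>2)\<^sup>2 \<le> (\<Sum>j<n. (D j)\<^sup>2)"
    using \<open>n > 0\<close> by (simp add: power2_eq_square algebra_simps)
  also have "\<dots> = real n * (H h \<bullet> h)"
    using hessian_loss_at_interpolating_minimum[OF min hess interp, of h] \<open>n > 0\<close>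
    by (simp add: D_def)
  finally have "((norm h)\<^sup>2)\<^sup>2 \<le> H h \<bullet> h"
    using \<open>n > 0\<close> by simp
  also have "\<dots> \<le> lambda_max H * (norm h)\<^sup>2"
    using hess by (rule hessian_quadratic_form_le_lambda_max)
  finally have "(norm h)\<^sup>2 * (norm h)\<^sup>2 \<le> lambda_max H * (norm h)\<^sup>2"
    by (simp add: power2_eq_square)
  moreover have "snd (snd (snd h)) = 1"
    using \<open>n > 0\<close> by (simp add: h_def mean_net_grad_def snd_sum net_grad_def \<theta>)
  then have "(norm h)\<^sup>2 > 0"
    by auto
  ultimately show ?thesis
    unfolding h_def[symmetric] using mult_le_cancel_right_pos by blast
qed

section \<open>Single neurons and the weight g\<close>

lemma g_tilde_nonneg: "g_tilde n x v b \<ge> 0"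
proof -
  have "(\<Sum>j\<in>active n x v b. x j \<bullet> v - b) \<ge> 0"
    by (rule sum_nonneg) (auto simp: active_def)
  then show ?thesis
    unfolding g_tilde_def Let_def by auto
qed

lemma g_fun_nonneg: "g_fun n x v b \<ge> 0"
  unfolding g_fun_def by (simp add: g_tilde_nonneg)

lemma g_fun_uminus: "g_fun n x (- v) (- b) = g_fun n x v b"
  unfolding g_fun_def by (simp add: min.commute)

text \<open>Averages over the samples of the gradient of a single neuron \<open>c relu (z \<bullet> w + \<beta>)\<close> with
  respect to its output weight \<open>c\<close> and to its input parameters \<open>(w, \<beta>)\<close>.\<close>
definition neuron_out_grad :: "nat \<Rightarrow> (nat \<Rightarrow> real^'d) \<Rightarrow> real^'d \<Rightarrow> real \<Rightarrow> real" where
  "neuron_out_grad n x w \<beta> = 1 / real n * (\<Sum>j<n. relu (x j \<bullet> w + \<beta>))"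

definition neuron_in_grad :: "nat \<Rightarrow> (nat \<Rightarrow> real^'d) \<Rightarrow> real^'d \<Rightarrow> real \<Rightarrow> real \<Rightarrow> (real^'d) \<times> real" where
  "neuron_in_grad n x w \<beta> c = (let J = {j. j < n \<and> x j \<bullet> w + \<beta> > 0} in
     ((c / real n) *\<^sub>R (\<Sum>j\<in>J. x j), c * real (card J) / real n))"

lemma active_sgn:
  assumes "w \<noteq> 0"
  shows "active n x (sgn w) (- \<beta> / norm w) = {j. j < n \<and> x j \<bullet> w + \<beta> > 0}"
proof -
  have "x j \<bullet> sgn w > - \<beta> / norm w \<longleftrightarrow> (x j \<bullet> w + \<beta>) / norm w > 0" for j
    using assms by (auto simp: sgn_div_norm field_simps)
  then show ?thesis
    unfolding active_def using assms by (auto simp: zero_less_divide_iff)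
qed

lemma neuron_mean_grads_eq_g_tilde:
  fixes w :: "real^'d::finite"
  assumes "w \<noteq> 0"
  shows "neuron_out_grad n x w \<beta> * norm (neuron_in_grad n x w \<beta> c)
         = \<bar>c * norm w\<bar> * g_tilde n x (sgn w) (- \<beta> / norm w)"
proof -
  define J where "J = {j. j < n \<and> x j \<bullet> w + \<beta> > 0}"
  define T where "T = (\<Sum>j\<in>J. x j \<bullet> w + \<beta>)"
  define S where "S = (\<Sum>j\<in>J. x j)"
  define N where "N = real (card J)"
  define R where "R = sqrt ((norm S)\<^sup>2 + N\<^sup>2)"
  have "norm w > 0"
    using assms by simp
  have active: "active n x (sgn w) (- \<beta> / norm w) = J"
    unfolding J_def using active_sgn[OF assms] .
  have "(\<Sum>j<n. relu (x j \<bullet> w + \<beta>)) = (\<Sum>j<n. if x j \<bullet> w + \<beta> > 0 then x j \<bullet> w + \<beta> else 0)"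
    by (intro sum.cong) (auto simp: relu_def)
  then have out: "neuron_out_grad n x w \<beta> = T / real n"
    unfolding neuron_out_grad_def T_def J_def
    by (simp add: sum.inter_filter[symmetric] lessThan_def conj_commute)
  have "(norm ((c / real n) *\<^sub>R S))\<^sup>2 + (norm (c * N / real n))\<^sup>2 = (c / real n)\<^sup>2 * ((norm S)\<^sup>2 + N\<^sup>2)"
    by (simp add: power_mult_distrib power_divide add_divide_distrib algebra_simps)
  then have inp: "norm (neuron_in_grad n x w \<beta> c) = \<bar>c\<bar> / real n * R"
    unfolding neuron_in_grad_def Let_def J_def[symmetric] S_def[symmetric] N_def[symmetric] norm_Pair R_def
    by (simp add: real_sqrt_mult)
  show ?thesis
  proof (cases "J = {}")
    case True
    then show ?thesis
      using active by (simp add: out T_def g_tilde_def)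
  next
    case False
    then have "N > 0"
      unfolding N_def J_def by (simp add: card_gt_0_iff)
    have "(\<Sum>j\<in>J. x j \<bullet> sgn w - - \<beta> / norm w) = T / norm w"
      using \<open>norm w > 0\<close> unfolding T_def by (simp add: sum_divide_distrib sgn_div_norm field_simps)
    moreover have "(norm ((1 / N) *\<^sub>R S))\<^sup>2 + 1 = ((norm S)\<^sup>2 + N\<^sup>2) / N\<^sup>2"
      using \<open>N > 0\<close> by (simp add: power_divide field_simps)
    then have "sqrt ((norm ((1 / N) *\<^sub>R S))\<^sup>2 + 1) = R / N"
      using \<open>N > 0\<close> unfolding R_def by (simp add: real_sqrt_divide)
    ultimately have "g_tilde n x (sgn w) (- \<beta> / norm w) = T * R / ((real n)\<^sup>2 * norm w)"
      using False \<open>N > 0\<close> unfolding g_tilde_def Let_def active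
      by (simp add: S_def N_def[symmetric] power2_eq_square field_simps)
    then show ?thesis
      using \<open>norm w > 0\<close> unfolding out inp by (simp add: abs_mult power2_eq_square field_simps)
  qed
qed

lemma neuron_mean_grads_bound:
  fixes w :: "real^'d::finite"
  shows "2 * (if w \<noteq> 0 then \<bar>c * norm w\<bar> * g_fun n x (sgn w) (- \<beta> / norm w) else 0)
         \<le> (neuron_out_grad n x w \<beta>)\<^sup>2 + (norm (neuron_in_grad n x w \<beta> c))\<^sup>2"
proof -
  let ?out = "neuron_out_grad n x w \<beta>" and ?inp = "norm (neuron_in_grad n x w \<beta> c)"
  have "?out \<ge> 0"
    unfolding neuron_out_grad_def by (simp add: sum_nonneg relu_nonneg)
  have "\<bar>c * norm w\<bar> * g_fun n x (sgn w) (- \<beta> / norm w) \<le> ?out * ?inp" if "w \<noteq> 0"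
  proof -
    have "g_fun n x (sgn w) (- \<beta> / norm w) \<le> g_tilde n x (sgn w) (- \<beta> / norm w)"
      by (simp add: g_fun_def)
    then have "\<bar>c * norm w\<bar> * g_fun n x (sgn w) (- \<beta> / norm w)
        \<le> \<bar>c * norm w\<bar> * g_tilde n x (sgn w) (- \<beta> / norm w)"
      by (rule mult_left_mono) simp
    also have "\<dots> = ?out * ?inp"
      using neuron_mean_grads_eq_g_tilde[OF that] by simp
    finally show ?thesis .
  qed
  moreover have "2 * (?out * ?inp) \<le> ?out\<^sup>2 + ?inp\<^sup>2"
    using sum_squares_bound[of ?out ?inp] by (simp add: power2_eq_square)
  ultimately show ?thesis
    using \<open>?out \<ge> 0\<close> by (auto intro: mult_nonneg_nonneg)
qed

lemma mean_net_grad_eq: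
  fixes W :: "(real^'d::finite)^'k::finite"
  assumes "n > 0"
  shows "mean_net_grad n x (W, B1, W2, b2)
    = ((\<chi> i. fst (neuron_in_grad n x (W $ i) (B1 $ i) (W2 $ i))),
       (\<chi> i. snd (neuron_in_grad n x (W $ i) (B1 $ i) (W2 $ i))),
       (\<chi> i. neuron_out_grad n x (W $ i) (B1 $ i)), 1)"
proof -
  define J where "J i = {j. j < n \<and> x j \<bullet> W $ i + B1 $ i > 0}" for i
  have filter: "(\<Sum>j<n. if x j \<bullet> W $ i + B1 $ i > 0 then f j else 0) = (\<Sum>j\<in>J i. f j)"
    for i and f :: "nat \<Rightarrow> 'b::comm_monoid_add"
    unfolding J_def by (simp add: sum.inter_filter[symmetric] lessThan_def conj_commute)
  have "(\<Sum>j<n. (if x j \<bullet> W $ i + B1 $ i > 0 then W2 $ i else 0) *\<^sub>R x j)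
      = (\<Sum>j<n. if x j \<bullet> W $ i + B1 $ i > 0 then W2 $ i *\<^sub>R x j else 0)" for i
    by (intro sum.cong) auto
  then have "(\<Sum>j<n. (if x j \<bullet> W $ i + B1 $ i > 0 then W2 $ i else 0) *\<^sub>R x j)
      = W2 $ i *\<^sub>R (\<Sum>j\<in>J i. x j)" for i
    using filter[of i "\<lambda>j. W2 $ i *\<^sub>R x j"] by (simp add: scaleR_sum_right)
  moreover have "(\<Sum>j<n. if x j \<bullet> W $ i + B1 $ i > 0 then W2 $ i else 0) = W2 $ i * real (card (J i))"
    for i
    using filter[of i "\<lambda>j. W2 $ i"] by simp
  ultimately show ?thesis
    using \<open>n > 0\<close> unfolding mean_net_grad_def net_grad_def prod_eq_iff vec_eq_iff
    by (simp add: fst_sum snd_sum sum_component neuron_in_grad_def neuron_out_grad_def J_def Let_def)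
qed

lemma norm_mean_net_grad_ge:
  fixes \<theta> :: "('d::finite, 'k::finite) params"
  assumes "n > 0" and \<theta>: "\<theta> = (W, B1, W2, b2)"
  shows "1 + 2 * (\<Sum>i\<in>{i. W $ i \<noteq> 0}. \<bar>W2 $ i * norm (W $ i)\<bar>
                     * g_fun n x (sgn (W $ i)) (- B1 $ i / norm (W $ i)))
         \<le> (norm (mean_net_grad n x \<theta>))\<^sup>2"
proof -
  have vec_sq: "(\<chi> i. f i) \<bullet> (\<chi> i. f i) = (\<Sum>i\<in>UNIV. f i \<bullet> f i)" for f :: "'k \<Rightarrow> 'b::real_inner"
    by (simp add: inner_vec_def)
  have "(norm (mean_net_grad n x \<theta>))\<^sup>2 = 1 + (\<Sum>i\<in>UNIV. (neuron_out_grad n x (W $ i) (B1 $ i))\<^sup>2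
      + (norm (neuron_in_grad n x (W $ i) (B1 $ i) (W2 $ i)))\<^sup>2)"
    unfolding \<theta> mean_net_grad_eq[OF \<open>n > 0\<close>] power2_norm_eq_inner
    by (simp add: inner_prod_def vec_sq sum.distrib power2_eq_square)
  moreover have "(\<Sum>i\<in>UNIV. 2 * (if W $ i \<noteq> 0 then \<bar>W2 $ i * norm (W $ i)\<bar>
                 * g_fun n x (sgn (W $ i)) (- B1 $ i / norm (W $ i)) else 0))
        \<le> (\<Sum>i\<in>UNIV. (neuron_out_grad n x (W $ i) (B1 $ i))\<^sup>2
            + (norm (neuron_in_grad n x (W $ i) (B1 $ i) (W2 $ i)))\<^sup>2)"
    by (intro sum_mono neuron_mean_grads_bound)
  ultimately show ?thesis
    by (simp add: sum_distrib_left[symmetric] sum.inter_filter[symmetric])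
qed


lemma net_eq_sum_normalized_neurons:
  fixes W :: "(real^'d::finite)^'k::finite"
  shows "net (W, B1, W2, b2) z
     = (\<Sum>i\<in>{i. W $ i \<noteq> 0}. (W2 $ i * norm (W $ i)) * relu (sgn (W $ i) \<bullet> z - - B1 $ i / norm (W $ i)))
       + ((\<Sum>i\<in>{i. W $ i = 0}. W2 $ i * relu (B1 $ i)) + b2)"
proof -
  define f where "f i = W2 $ i * relu (z \<bullet> W $ i + B1 $ i)" for i
  have "(\<Sum>i\<in>UNIV. f i) = (\<Sum>i\<in>{i. W $ i \<noteq> 0} \<union> {i. W $ i = 0}. f i)"
    by (rule sum.cong) auto
  also have "\<dots> = (\<Sum>i\<in>{i. W $ i \<noteq> 0}. f i) + (\<Sum>i\<in>{i. W $ i = 0}. f i)"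
    by (rule sum.union_disjoint) auto
  also have "(\<Sum>i\<in>{i. W $ i \<noteq> 0}. f i)
      = (\<Sum>i\<in>{i. W $ i \<noteq> 0}. (W2 $ i * norm (W $ i)) * relu (sgn (W $ i) \<bullet> z - - B1 $ i / norm (W $ i)))"
  proof (rule sum.cong)
    fix i
    assume "i \<in> {i. W $ i \<noteq> 0}"
    then have "z \<bullet> W $ i + B1 $ i = norm (W $ i) * (sgn (W $ i) \<bullet> z - - B1 $ i / norm (W $ i))"
      by (simp add: sgn_div_norm inner_commute field_simps)
    with \<open>i \<in> {i. W $ i \<noteq> 0}\<close> show "f i = (W2 $ i * norm (W $ i)) * relu (sgn (W $ i) \<bullet> z - - B1 $ i / norm (W $ i))"
      by (simp add: f_def relu_scale_pos)
  qed simp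
  also have "(\<Sum>i\<in>{i. W $ i = 0}. f i) = (\<Sum>i\<in>{i. W $ i = 0}. W2 $ i * relu (B1 $ i))"
    by (rule sum.cong) (simp_all add: f_def)
  finally show ?thesis
    unfolding net_def f_def by simp
qed

section \<open>Uniqueness of ReLU representations\<close>

lemma relu_add_relu_minus: "relu (a + d) + relu (a - d) = 2 * relu a" if "\<bar>d\<bar> \<le> \<bar>a\<bar>"
  using that unfolding relu_def by auto

lemma relu_add_relu_uminus: "relu d + relu (- d) = \<bar>d\<bar>"
  unfolding relu_def by auto

text \<open>The second difference \<open>f (t\<^sub>0 + s) + f (t\<^sub>0 - s) - 2 f t\<^sub>0\<close> of an affine function vanishes;
  for small \<open>s > 0\<close> only the kinks located at \<open>t\<^sub>0\<close> contribute to it.\<close>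
lemma relu_sum_affine_kink_weights:
  fixes L :: "'l set" and c k r :: "'l \<Rightarrow> real"
  assumes "finite L" and k: "\<And>l. l \<in> L \<Longrightarrow> k l \<noteq> 0"
    and affine: "\<And>t. (\<Sum>l\<in>L. c l * relu (k l * (t - r l))) + \<alpha> * t + \<beta> = 0"
  shows "(\<Sum>l\<in>{l\<in>L. r l = t\<^sub>0}. c l * \<bar>k l\<bar>) = 0"
proof -
  define \<Delta> where "\<Delta> s l = c l * (relu (k l * (t\<^sub>0 + s - r l)) + relu (k l * (t\<^sub>0 - s - r l))
      - 2 * relu (k l * (t\<^sub>0 - r l)))" for s l
  have "eventually (\<lambda>s. s < \<bar>t\<^sub>0 - r l\<bar>) (at_right 0)" if "r l \<noteq> t\<^sub>0" for l
    using eventually_at_right_0_mult_less[of "\<bar>t\<^sub>0 - r l\<bar>" 1] that by simp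
  then have "eventually (\<lambda>s. s > 0 \<and> (\<forall>l\<in>L. r l \<noteq> t\<^sub>0 \<longrightarrow> s < \<bar>t\<^sub>0 - r l\<bar>)) (at_right 0)"
    using \<open>finite L\<close> eventually_at_right_less[of 0]
    by (intro eventually_conj eventually_ball_finite ballI) auto
  then obtain s where "s > 0" and s: "\<And>l. l \<in> L \<Longrightarrow> r l \<noteq> t\<^sub>0 \<Longrightarrow> s < \<bar>t\<^sub>0 - r l\<bar>"
    using eventually_happens'[OF trivial_limit_at_right_real] by blast
  have "\<Delta> s l = s * (if r l = t\<^sub>0 then c l * \<bar>k l\<bar> else 0)" if "l \<in> L" for l
  proof (cases "r l = t\<^sub>0")
    case True
    then show ?thesis
      using relu_add_relu_uminus[of "k l * s"] \<open>s > 0\<close>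
      by (simp add: \<Delta>_def relu_def abs_mult algebra_simps)
  next
    case False
    have "\<bar>k l * s\<bar> \<le> \<bar>k l * (t\<^sub>0 - r l)\<bar>"
      using s[OF that False] \<open>s > 0\<close> by (simp add: abs_mult mult_left_mono)
    from relu_add_relu_minus[OF this] False show ?thesis
      by (simp add: \<Delta>_def algebra_simps)
  qed
  then have "(\<Sum>l\<in>L. \<Delta> s l) = s * (\<Sum>l\<in>{l\<in>L. r l = t\<^sub>0}. c l * \<bar>k l\<bar>)"
    using \<open>finite L\<close> by (simp add: sum.inter_filter sum_distrib_left[symmetric])
  moreover have "(\<Sum>l\<in>L. \<Delta> s l) = 0"
  proof -
    define F where "F t = (\<Sum>l\<in>L. c l * relu (k l * (t - r l)))" for t
    have F: "F t = - \<alpha> * t - \<beta>" for t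
      using affine[of t] unfolding F_def by linarith
    have "(\<Sum>l\<in>L. \<Delta> s l) = F (t\<^sub>0 + s) + F (t\<^sub>0 - s) - 2 * F t\<^sub>0"
      unfolding \<Delta>_def F_def by (simp add: sum.distrib sum_subtractf sum_distrib_left algebra_simps)
    then show ?thesis
      unfolding F by (simp add: algebra_simps)
  qed
  ultimately show ?thesis
    using \<open>s > 0\<close> by simp
qed

lemma finite_hyperplanes_not_cover:
  fixes a :: "'i \<Rightarrow> 'a::euclidean_space" and b :: "'i \<Rightarrow> real"
  assumes "finite I" and "\<And>i. i \<in> I \<Longrightarrow> a i \<noteq> 0 \<or> b i \<noteq> 0"
  obtains p where "\<And>i. i \<in> I \<Longrightarrow> a i \<bullet> p \<noteq> b i"
proof -
  have "negligible (\<Union>i\<in>I. {p. a i \<bullet> p = b i})"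
    using assms by (intro negligible_Union) (auto intro: negligible_hyperplane)
  then obtain p where "p \<notin> (\<Union>i\<in>I. {p. a i \<bullet> p = b i})"
    by (metis UNIV_eq_I non_negligible_UNIV)
  with that show ?thesis
    by blast
qed

definition same_hyperplane :: "'a::real_vector \<times> real \<Rightarrow> 'a \<times> real \<Rightarrow> bool" where
  "same_hyperplane P Q \<longleftrightarrow> P = Q \<or> P = - Q"

lemma same_hyperplane_cong_right:
  "same_hyperplane Q P \<Longrightarrow> same_hyperplane X Q \<longleftrightarrow> same_hyperplane X P"
  unfolding same_hyperplane_def by auto

lemma unit_normal_scaled_eq:
  fixes u u' :: "'a::real_normed_vector"
  assumes "norm u = 1" "norm u' = 1" "k \<noteq> 0" "k' \<noteq> 0"
    and "u' /\<^sub>R k' = u /\<^sub>R k" "t' / k' = t / k"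
  shows "same_hyperplane (u, t) (u', t')"
proof -
  define \<mu> where "\<mu> = k' / k"
  have "u' = \<mu> *\<^sub>R u" "t' = \<mu> * t"
    using assms(3-6) unfolding \<mu>_def by (auto simp: field_simps dest: arg_cong[of _ _ "scaleR k'"])
  moreover from this have "\<bar>\<mu>\<bar> = 1"
    using assms(1,2) by simp
  ultimately show ?thesis
    by (auto simp: same_hyperplane_def abs_if split: if_splits)
qed

lemma crossing_parameter_eq:
  assumes "same_hyperplane (u, t) (u', t')"
  shows "(t - u \<bullet> p) / (u \<bullet> w) = (t' - u' \<bullet> p) / (u' \<bullet> w)"
  using assms unfolding same_hyperplane_def by (auto simp: diff_divide_distrib)

text \<open>The line \<open>p + \<tau> w\<close> crosses the hyperplane \<open>u l \<bullet> z = t l\<close> at the parameter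
  \<open>\<tau> = (t l - u l \<bullet> p) / (u l \<bullet> w)\<close>.\<close>
lemma exists_line_separating_hyperplanes:
  fixes u :: "'l \<Rightarrow> 'a::euclidean_space" and t :: "'l \<Rightarrow> real"
  assumes "finite L" and unit: "\<And>l. l \<in> L \<Longrightarrow> norm (u l) = 1"
  obtains w p where "\<And>l. l \<in> L \<Longrightarrow> u l \<bullet> w \<noteq> 0"
    and "\<And>l l'. l \<in> L \<Longrightarrow> l' \<in> L \<Longrightarrow>
           (t l - u l \<bullet> p) / (u l \<bullet> w) = (t l' - u l' \<bullet> p) / (u l' \<bullet> w)
           \<longleftrightarrow> same_hyperplane (u l, t l) (u l', t l')"
proof -
  obtain w where w: "\<And>l. l \<in> L \<Longrightarrow> u l \<bullet> w \<noteq> 0"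
    by (rule finite_hyperplanes_not_cover[OF \<open>finite L\<close>, of u "\<lambda>_. 0"]) (auto dest!: unit)
  define k where "k l = u l \<bullet> w" for l
  define I where "I = {(l, l'). l \<in> L \<and> l' \<in> L \<and> \<not> same_hyperplane (u l, t l) (u l', t l')}"
  have "I \<subseteq> L \<times> L"
    by (auto simp: I_def)
  then have "finite I"
    using \<open>finite L\<close> finite_subset by blast
  then obtain p where p: "\<And>l l'. (l, l') \<in> I \<Longrightarrow>
      (u l' /\<^sub>R k l' - u l /\<^sub>R k l) \<bullet> p \<noteq> t l' / k l' - t l / k l"
  proof (rule finite_hyperplanes_not_cover[of I "\<lambda>(l, l'). u l' /\<^sub>R k l' - u l /\<^sub>R k l"
        "\<lambda>(l, l'). t l' / k l' - t l / k l"])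
    fix i
    assume "i \<in> I"
    then obtain l l' where "i = (l, l')" "l \<in> L" "l' \<in> L" "\<not> same_hyperplane (u l, t l) (u l', t l')"
      unfolding I_def by auto
    then show "(case i of (l, l') \<Rightarrow> u l' /\<^sub>R k l' - u l /\<^sub>R k l) \<noteq> 0 \<or>
        (case i of (l, l') \<Rightarrow> t l' / k l' - t l / k l) \<noteq> 0"
      using unit_normal_scaled_eq[of "u l" "u l'" "k l" "k l'" "t l'" "t l"] unit w
      unfolding k_def by auto
  qed auto
  have "(t l - u l \<bullet> p) / k l = (t l' - u l' \<bullet> p) / k l' \<longleftrightarrow> same_hyperplane (u l, t l) (u l', t l')"
    if "l \<in> L" "l' \<in> L" for l l'
  proof
    assume "(t l - u l \<bullet> p) / k l = (t l' - u l' \<bullet> p) / k l'"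
    moreover have "(u l' /\<^sub>R k l' - u l /\<^sub>R k l) \<bullet> p = u l' \<bullet> p / k l' - u l \<bullet> p / k l"
      by (simp add: inner_diff_left divide_inverse mult.commute)
    ultimately have "(u l' /\<^sub>R k l' - u l /\<^sub>R k l) \<bullet> p = t l' / k l' - t l / k l"
      unfolding diff_divide_distrib by linarith
    then show "same_hyperplane (u l, t l) (u l', t l')"
      using p[of l l'] that unfolding I_def by auto
  next
    assume "same_hyperplane (u l, t l) (u l', t l')"
    then show "(t l - u l \<bullet> p) / k l = (t l' - u l' \<bullet> p) / k l'"
      unfolding k_def by (rule crossing_parameter_eq)
  qed
  with w that show ?thesis
    unfolding k_def by blast
qed

text \<open>Restricted to a line as in the previous lemma, the identity becomes one-dimensional, and the
  kinks at the crossing parameter of a given hyperplane are exactly those of the neurons on it.\<close>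
lemma relu_sum_affine_hyperplane_weights:
  fixes L :: "'l set" and c t :: "'l \<Rightarrow> real" and u :: "'l \<Rightarrow> 'a::euclidean_space" and q :: 'a
  assumes "finite L" and unit: "\<And>l. l \<in> L \<Longrightarrow> norm (u l) = 1"
    and affine: "\<And>z. (\<Sum>l\<in>L. c l * relu (u l \<bullet> z - t l)) + q \<bullet> z + c\<^sub>0 = 0"
  shows "(\<Sum>l\<in>{l\<in>L. same_hyperplane (u l, t l) P}. c l) = 0"
proof (cases "{l\<in>L. same_hyperplane (u l, t l) P} = {}")
  case False
  then obtain l\<^sub>0 where "l\<^sub>0 \<in> L" and "same_hyperplane (u l\<^sub>0, t l\<^sub>0) P"
    by blast
  then have eq_class: "{l\<in>L. same_hyperplane (u l, t l) P} = {l\<in>L. same_hyperplane (u l, t l) (u l\<^sub>0, t l\<^sub>0)}"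
    using same_hyperplane_cong_right by blast
  obtain w p where w: "\<And>l. l \<in> L \<Longrightarrow> u l \<bullet> w \<noteq> 0"
    and p: "\<And>l l'. l \<in> L \<Longrightarrow> l' \<in> L \<Longrightarrow>
      (t l - u l \<bullet> p) / (u l \<bullet> w) = (t l' - u l' \<bullet> p) / (u l' \<bullet> w)
      \<longleftrightarrow> same_hyperplane (u l, t l) (u l', t l')"
    using exists_line_separating_hyperplanes[of L u t] \<open>finite L\<close> unit by blast
  define k where "k l = u l \<bullet> w" for l
  define r where "r l = (t l - u l \<bullet> p) / k l" for l
  have "(\<Sum>l\<in>{l\<in>L. r l = r l\<^sub>0}. c l * \<bar>k l\<bar>) = 0"
  proof (rule relu_sum_affine_kink_weights[OF \<open>finite L\<close>])
    show "k l \<noteq> 0" if "l \<in> L" for l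
      using w[OF that] by (simp add: k_def)
    fix \<tau>
    have "u l \<bullet> (p + \<tau> *\<^sub>R w) - t l = k l * (\<tau> - r l)" if "l \<in> L" for l
      using w[OF that] by (simp add: k_def r_def inner_add_right field_simps)
    then have "(\<Sum>l\<in>L. c l * relu (k l * (\<tau> - r l))) = (\<Sum>l\<in>L. c l * relu (u l \<bullet> (p + \<tau> *\<^sub>R w) - t l))"
      by (intro sum.cong) simp_all
    moreover have "q \<bullet> (p + \<tau> *\<^sub>R w) = q \<bullet> p + \<tau> * (q \<bullet> w)"
      by (simp add: inner_add_right)
    ultimately show "(\<Sum>l\<in>L. c l * relu (k l * (\<tau> - r l))) + (q \<bullet> w) * \<tau> + (q \<bullet> p + c\<^sub>0) = 0"
      using affine[of "p + \<tau> *\<^sub>R w"] by (simp add: algebra_simps)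
  qed
  moreover have "{l\<in>L. r l = r l\<^sub>0} = {l\<in>L. same_hyperplane (u l, t l) (u l\<^sub>0, t l\<^sub>0)}"
  proof (rule set_eqI)
    show "l \<in> {l\<in>L. r l = r l\<^sub>0} \<longleftrightarrow> l \<in> {l\<in>L. same_hyperplane (u l, t l) (u l\<^sub>0, t l\<^sub>0)}" for l
      using p[of l l\<^sub>0] \<open>l\<^sub>0 \<in> L\<close> by (auto simp: r_def k_def)
  qed
  moreover have "\<bar>k l\<bar> = \<bar>k l\<^sub>0\<bar>" if "same_hyperplane (u l, t l) (u l\<^sub>0, t l\<^sub>0)" for l
    using that unfolding same_hyperplane_def k_def by auto
  ultimately have "(\<Sum>l\<in>{l\<in>L. same_hyperplane (u l, t l) P}. c l) * \<bar>k l\<^sub>0\<bar> = 0"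
    unfolding eq_class by (simp add: sum_distrib_right)
  then show ?thesis
    using w[OF \<open>l\<^sub>0 \<in> L\<close>] by (simp add: k_def)
qed (simp only: sum.empty)

section \<open>The weighted Radon norm\<close>

lemma radon_atoms_eq:
  "radon_atoms m a v b P = (\<Sum>i\<in>{i. i < m \<and> same_hyperplane (v i, b i) P}. a i) / 2"
  unfolding radon_atoms_def same_hyperplane_def by (cases P) simp

lemma relu_repr_hyperplane_weights_eq:
  fixes a :: "nat \<Rightarrow> real" and v :: "nat \<Rightarrow> 'a::euclidean_space" and b :: "nat \<Rightarrow> real"
    and K :: "'k set" and a' t' :: "'k \<Rightarrow> real" and v' :: "'k \<Rightarrow> 'a"
  assumes "finite K" and unit: "\<And>i. i < m \<Longrightarrow> norm (v i) = 1" and unit': "\<And>k. k \<in> K \<Longrightarrow> norm (v' k) = 1"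
    and repr: "\<And>z. (\<Sum>i<m. a i * relu (v i \<bullet> z - b i)) + q \<bullet> z + c
                 = (\<Sum>k\<in>K. a' k * relu (v' k \<bullet> z - t' k)) + c'"
  shows "(\<Sum>i\<in>{i. i < m \<and> same_hyperplane (v i, b i) P}. a i)
       = (\<Sum>k\<in>{k\<in>K. same_hyperplane (v' k, t' k) P}. a' k)"
proof -
  define L :: "(nat + 'k) set" where "L = Inl ` {..<m} \<union> Inr ` K"
  define w where "w = case_sum a (\<lambda>k. - a' k)"
  define u where "u = case_sum v v'"
  define t where "t = case_sum b t'"
  have split: "(\<Sum>l\<in>Inl ` A \<union> Inr ` B. f l) = (\<Sum>i\<in>A. f (Inl i)) + (\<Sum>k\<in>B. f (Inr k))"
    if "finite A" "finite B" for A :: "nat set" and B :: "'k set" and f :: "nat + 'k \<Rightarrow> real"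
    using that by (subst sum.union_disjoint) (auto simp: sum.reindex)
  have "(\<Sum>l\<in>L. w l * relu (u l \<bullet> z - t l)) + q \<bullet> z + (c - c') = 0" for z
    using repr[of z] \<open>finite K\<close> by (simp add: L_def split w_def u_def t_def sum_negf)
  moreover have "finite L"
    using \<open>finite K\<close> by (simp add: L_def)
  moreover have "norm (u l) = 1" if "l \<in> L" for l
    using that unit unit' by (auto simp: L_def u_def)
  ultimately have "(\<Sum>l\<in>{l\<in>L. same_hyperplane (u l, t l) P}. w l) = 0"
    by (intro relu_sum_affine_hyperplane_weights) auto
  moreover have "{l\<in>L. same_hyperplane (u l, t l) P}
      = Inl ` {i. i < m \<and> same_hyperplane (v i, b i) P} \<union> Inr ` {k\<in>K. same_hyperplane (v' k, t' k) P}"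
    by (auto simp: L_def u_def t_def)
  ultimately show ?thesis
    using \<open>finite K\<close> by (simp add: split w_def sum_negf)
qed

lemma radon_norm_le_of_repr:
  fixes g :: "real^'d::finite \<Rightarrow> real \<Rightarrow> real" and K :: "'k set"
    and v' :: "'k \<Rightarrow> real^'d" and t' a' :: "'k \<Rightarrow> real"
  assumes g_nonneg: "\<And>u s. g u s \<ge> 0" and g_uminus: "\<And>u s. g (- u) (- s) = g u s"
    and "finite K" and unit: "\<And>i. i < m \<Longrightarrow> norm (v i) = 1"
    and unit': "\<And>k. k \<in> K \<Longrightarrow> norm (v' k) = 1"
    and repr: "\<And>z. (\<Sum>i<m. a i * relu (v i \<bullet> z - b i)) + q \<bullet> z + c
                 = (\<Sum>k\<in>K. a' k * relu (v' k \<bullet> z - t' k)) + c'"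
  shows "radon_norm g m a v b \<le> (\<Sum>k\<in>K. \<bar>a' k\<bar> * g (v' k) (t' k))"
proof -
  define S where "S = radon_support m v b"
  define G where "G k P = \<bar>a' k\<bar> * g (fst P) (snd P) / 2" for k P
  have "finite S"
    unfolding S_def radon_support_def by simp
  have "(\<Sum>i\<in>{i. i < m \<and> same_hyperplane (v i, b i) P}. a i)
      = (\<Sum>k\<in>{k\<in>K. same_hyperplane (v' k, t' k) P}. a' k)" for P
    by (rule relu_repr_hyperplane_weights_eq[OF \<open>finite K\<close> _ _ repr]) (simp_all add: unit unit')
  then have "radon_norm g m a v b
      = (\<Sum>P\<in>S. \<bar>\<Sum>k\<in>{k\<in>K. same_hyperplane (v' k, t' k) P}. a' k\<bar> / 2 * g (fst P) (snd P))"
    unfolding radon_norm_def S_def radon_atoms_eq by simp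
  also have "\<dots> \<le> (\<Sum>P\<in>S. \<Sum>k\<in>{k\<in>K. same_hyperplane (v' k, t' k) P}. G k P)"
  proof (rule sum_mono)
    fix P
    have "\<bar>\<Sum>k\<in>{k\<in>K. same_hyperplane (v' k, t' k) P}. a' k\<bar> / 2 * g (fst P) (snd P)
        \<le> (\<Sum>k\<in>{k\<in>K. same_hyperplane (v' k, t' k) P}. \<bar>a' k\<bar>) / 2 * g (fst P) (snd P)"
      by (intro mult_right_mono divide_right_mono sum_abs g_nonneg) simp
    then show "\<bar>\<Sum>k\<in>{k\<in>K. same_hyperplane (v' k, t' k) P}. a' k\<bar> / 2 * g (fst P) (snd P)
        \<le> (\<Sum>k\<in>{k\<in>K. same_hyperplane (v' k, t' k) P}. G k P)"
      by (simp add: G_def sum_divide_distrib sum_distrib_right)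
  qed
  also have "\<dots> = (\<Sum>k\<in>K. \<Sum>P\<in>{P\<in>S. same_hyperplane (v' k, t' k) P}. G k P)"
    by (rule sum.swap_restrict[OF \<open>finite S\<close> \<open>finite K\<close>])
  also have "\<dots> \<le> (\<Sum>k\<in>K. \<Sum>P\<in>{(v' k, t' k), (- v' k, - t' k)}. G k P)"
    by (intro sum_mono sum_mono2) (auto simp: same_hyperplane_def G_def g_nonneg)
  also have "\<dots> = (\<Sum>k\<in>K. \<bar>a' k\<bar> * g (v' k) (t' k))"
  proof (rule sum.cong[OF refl])
    fix k
    assume "k \<in> K"
    then have "v' k \<noteq> 0"
      using unit' by force
    then have "(v' k, t' k) \<noteq> (- v' k, - t' k)"
      by (simp add: eq_neg_iff_add_eq_0 flip: scaleR_2)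
    then show "(\<Sum>P\<in>{(v' k, t' k), (- v' k, - t' k)}. G k P) = \<bar>a' k\<bar> * g (v' k) (t' k)"
      by (simp add: G_def g_uminus field_simps)
  qed
  finally show ?thesis .
qed

theorem lemma3:
  fixes n :: nat and x :: "nat \<Rightarrow> real^'d::finite" and y :: "nat \<Rightarrow> real"
    and \<theta> :: "('d, 'k::finite) params" and H :: "('d, 'k) params \<Rightarrow> ('d, 'k) params"
    and m :: nat and a :: "nat \<Rightarrow> real" and v :: "nat \<Rightarrow> real^'d" and b :: "nat \<Rightarrow> real"
    and q :: "real^'d" and c :: real
  assumes "n > 0"
    and min: "\<forall>\<theta>' :: ('d, 'k) params. loss n x y \<theta> \<le> loss n x y \<theta>'"
    and hess: "twice_diff_hessian (loss n x y) \<theta> H"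
    and interp: "\<forall>j<n. net \<theta> (x j) = y j"
    and unit: "\<forall>i<m. norm (v i) = 1"
    and repr: "\<forall>z. net \<theta> z = (\<Sum>i<m. a i * relu (v i \<bullet> z - b i)) + q \<bullet> z + c"
  shows "lambda_max H \<ge> 1 + 2 * radon_norm (g_fun n x) m a v b"
proof -
  obtain W B1 W2 b2 where \<theta>: "\<theta> = (W, B1, W2, b2)"
    by (cases \<theta>) auto
  have "radon_norm (g_fun n x) m a v b
      \<le> (\<Sum>i\<in>{i. W $ i \<noteq> 0}. \<bar>W2 $ i * norm (W $ i)\<bar> * g_fun n x (sgn (W $ i)) (- B1 $ i / norm (W $ i)))"
  proof (rule radon_norm_le_of_repr[where g = "g_fun n x"])
    show "(\<Sum>i<m. a i * relu (v i \<bullet> z - b i)) + q \<bullet> z + c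
        = (\<Sum>i\<in>{i. W $ i \<noteq> 0}. (W2 $ i * norm (W $ i)) * relu (sgn (W $ i) \<bullet> z - - B1 $ i / norm (W $ i)))
          + ((\<Sum>i\<in>{i. W $ i = 0}. W2 $ i * relu (B1 $ i)) + b2)" for z
      using repr net_eq_sum_normalized_neurons[of W B1 W2 b2 z] by (simp add: \<theta>)
  qed (use unit g_fun_nonneg g_fun_uminus in \<open>auto simp: norm_sgn\<close>)
  also have "1 + 2 * \<dots> \<le> (norm (mean_net_grad n x \<theta>))\<^sup>2"
    by (rule norm_mean_net_grad_ge[OF \<open>n > 0\<close> \<theta>])
  also have "\<dots> \<le> lambda_max H"
    by (rule norm_mean_net_grad_le_lambda_max[OF \<open>n > 0\<close> min hess interp])
  finally show ?thesis
    by linarith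
qed

end
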